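(* Let $C=(C_{jl})\in\mathbb R^{d\times d}$ satisfy Condition A, let $f(t)$ solve $\partial_tf=\mathrm{div}_x(C_S\nabla_xf+Cxf)$ in $\mathcal H$, with Hermite coefficients $d_\alpha(t)=\langle f(t),g_\alpha\rangle_{\mathcal H}/\|g_\alpha\|_{\mathcal H}^2$, and fix $m\ge1$. Define $D^{(m)}_\alpha(t):=d_\alpha(t)/\gamma_\alpha$ for $\alpha\in S^{(m)}$, where $\gamma_\alpha=\frac{m!}{\alpha_1!\cdots\alpha_d!}$. Then for every $\alpha\in S^{(m)}$, $$\dot D^{(m)}_\alpha=-\sum_{j,l=1}^d\alpha_jC_{jl}\,D^{(m)}_{(\alpha^{(j-)})^{(l+)}} .$$
   Context: $C_S=\frac12(C+C^T)$. Condition A: (1) $C_S$ positive semi-definite; (2) no non-trivial $C^T$-invariant subspace of $\ker C_S$. $f_\infty(x)=(2\pi)^{-d/2}e^{-|x|^2/2}$, $\mathcal H=L^2(\mathbb R^d,f_\infty^{-1})$ with inner product $\int fgf_\infty^{-1}dx$. With $g(y)=(2\pi)^{-1/2}e^{-y^2/2}$ and probabilists' Hermite polynomials $H_n(y)=(-1)^ne^{y^2/2}\frac{d^n}{dy^n}e^{-y^2/2}$, $g_\alpha(x)=\prod_{i=1}^dH_{\alpha_i}(x_i)g(x_i)$, an orthogonal basis of $\mathcal H$. $S^{(m)}=\{\alpha\in\mathbb N_0^d:|\alpha|=\alpha_1+\dots+\alpha_d=m\}$. For $\alpha\in\mathbb N_0^d$ and $l\in\{1,\dots,d\}$: $\alpha^{(l\pm)}_j=\alpha_j$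 for $j\ne l$ and $\alpha^{(l\pm)}_l=(\alpha_l\pm1)_+$. (Terms with $\alpha_j=0$ vanish; the family $(D^{(m)}_\alpha)_{\alpha\in S^{(m)}}$ is identified with the symmetric $m$-tensor $D^{(m)}$ whose entry at $(i_1,\dots,i_m)$ is $D^{(m)}_\alpha$ with $\alpha_k=\#\{r:i_r=k\}$.) *)

theory Defs
  imports "HOL-Analysis.Analysis"
begin

definition sym_part :: "real^'d^'d \<Rightarrow> real^'d^'d" where
  "sym_part C = (1/2) *\<^sub>R (C + transpose C)"

definition conditionA :: "real^'d^'d \<Rightarrow> bool" where
  "conditionA C \<longleftrightarrow>
     (\<forall>x. 0 \<le> x \<bullet> (sym_part C *v x)) \<and>
     (\<forall>V. subspace V \<and> V \<subseteq> {x. sym_part C *v x = 0} \<and>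
          (\<forall>v\<in>V. transpose C *v v \<in> V) \<longrightarrow> V = {0})"

definition finf :: "real^'d \<Rightarrow> real" where
  "finf x = (2*pi) powr (- real CARD('d) / 2) * exp (- ((norm x)^2) / 2)"

definition inH :: "(real^'d \<Rightarrow> real) \<Rightarrow> bool" where
  "inH u \<longleftrightarrow> u \<in> borel_measurable lborel \<and>
     integrable lborel (\<lambda>x. (u x)^2 / finf x)"

definition Hinner :: "(real^'d \<Rightarrow> real) \<Rightarrow> (real^'d \<Rightarrow> real) \<Rightarrow> real" where
  "Hinner u v = (\<integral>x. u x * v x / finf x \<partial>lborel)"

definition Hnorm :: "(real^'d \<Rightarrow> real) \<Rightarrow> real" where
  "Hnorm u = sqrt (Hinner u u)"

definition gauss1 :: "real \<Rightarrow> real" where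
  "gauss1 y = exp (- (y^2) / 2) / sqrt (2*pi)"

definition hermite :: "nat \<Rightarrow> real \<Rightarrow> real" where
  "hermite n y = (-1)^n * exp (y^2 / 2) * (deriv ^^ n) (\<lambda>z. exp (- (z^2) / 2)) y"

definition g_alpha :: "('d \<Rightarrow> nat) \<Rightarrow> real^'d \<Rightarrow> real" where
  "g_alpha \<alpha> x = (\<Prod>i\<in>UNIV. hermite (\<alpha> i) (x$i) * gauss1 (x$i))"

definition mabs :: "('d::finite \<Rightarrow> nat) \<Rightarrow> nat" where
  "mabs \<alpha> = (\<Sum>i\<in>UNIV. \<alpha> i)"

definition multinom :: "('d::finite \<Rightarrow> nat) \<Rightarrow> real" where
  "multinom \<alpha> = fact (mabs \<alpha>) / (\<Prod>i\<in>UNIV. fact (\<alpha> i))"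

definition hcoeff :: "(real^'d \<Rightarrow> real) \<Rightarrow> ('d \<Rightarrow> nat) \<Rightarrow> real" where
  "hcoeff u \<alpha> = Hinner u (g_alpha \<alpha>) / (Hnorm (g_alpha \<alpha>))^2"

text \<open>alpha^(l-) and alpha^(l+) (nat subtraction truncates at 0).\<close>
definition mminus :: "('d \<Rightarrow> nat) \<Rightarrow> 'd \<Rightarrow> ('d \<Rightarrow> nat)" where
  "mminus \<alpha> l = \<alpha>(l := \<alpha> l - 1)"

definition mplus :: "('d \<Rightarrow> nat) \<Rightarrow> 'd \<Rightarrow> ('d \<Rightarrow> nat)" where
  "mplus \<alpha> l = \<alpha>(l := \<alpha> l + 1)"

definition pd :: "'d \<Rightarrow> (real^'d \<Rightarrow> real) \<Rightarrow> real^'d \<Rightarrow> real" where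
  "pd i \<phi> x = deriv (\<lambda>s. \<phi> (x + s *\<^sub>R axis i 1)) 0"

definition test_fun :: "(real^'d \<Rightarrow> real) \<Rightarrow> bool" where
  "test_fun \<phi> \<longleftrightarrow> (\<exists>R. \<forall>x. R < norm x \<longrightarrow> \<phi> x = 0) \<and>
     (\<forall>x. \<phi> differentiable (at x)) \<and>
     (\<forall>i x. pd i \<phi> differentiable (at x)) \<and>
     (\<forall>i j. continuous_on UNIV (pd j (pd i \<phi>)))"

text \<open>Formal adjoint of L f = div(C_S grad f + C x f).\<close>
definition Lstar :: "real^'d^'d \<Rightarrow> (real^'d \<Rightarrow> real) \<Rightarrow> real^'d \<Rightarrow> real" where
  "Lstar C \<phi> x = (\<Sum>i\<in>UNIV. \<Sum>j\<in>UNIV. sym_part C $ i $ j * pd i (pd j \<phi>) x)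
                 - (\<Sum>i\<in>UNIV. (C *v x) $ i * pd i \<phi> x)"

text \<open>f solves d/dt f = div(C_S grad f + C x f) in H for t > 0: f(t) is in H,
  t \<mapsto> f(t) is differentiable in the norm of H, and the derivative equals
  div(C_S grad f(t) + C x f(t)) in the sense of distributions.\<close>
definition FP_solution_H :: "real^'d^'d \<Rightarrow> (real \<Rightarrow> real^'d \<Rightarrow> real) \<Rightarrow> bool" where
  "FP_solution_H C f \<longleftrightarrow> (\<forall>t>0. inH (f t) \<and>
     (\<exists>f'. inH f' \<and>
        ((\<lambda>h. Hnorm (\<lambda>x. (f (t + h) x - f t x) / h - f' x)) \<longlongrightarrow> 0) (at 0) \<and>
        (\<forall>\<phi>. test_fun \<phi> \<longrightarrow>
           (\<integral>x. f' x * \<phi> x \<partial>lborel) = (\<integral>x. f t x * Lstar C \<phi> x \<partial>lborel))))"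

end

(* Dividing d_alpha by the multinomial coefficient gives D_alpha = <f, g_alpha>_H / m!, because
   ||g_alpha||^2 = alpha_1! ... alpha_d!; moreover <f, g_alpha>_H is the integral of f against the
   Hermite polynomial H_alpha = g_alpha / f_infinity. Differentiating and using the weak form of the
   equation, D_alpha' is the integral of f against L* H_alpha, divided by m!, where
   L* phi = C_S : D^2 phi - C x . grad phi is the formal adjoint. The recurrences
   x H_n = H_(n+1) + n H_(n-1) and H_n' = n H_(n-1) give
   L* H_alpha = - sum_(j,l) alpha_j C_jl H_(alpha - e_j + e_l):
   the second-order term, which only sees C_S, cancels the lowering part of the drift term.
   Since |alpha - e_j + e_l| = m whenever alpha_j > 0, all terms carry the same factor 1/m!.
   H_alpha is not a test function, so the weak equation is first extended to it: multiplied by the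
   cut-offs (1 - (x_k/n)^2)_+^3, the H_alpha become C^2 test functions, and dominated convergence
   applies on both sides, since polynomial majorants are square integrable against f_infinity. *)

theory Submission
  imports Defs "HOL-Probability.Distributions" "HOL-Computational_Algebra.Polynomial"
begin

section \<open>Hermite polynomials\<close>

fun hermite_poly :: "nat \<Rightarrow> real poly" where
  "hermite_poly 0 = 1"
| "hermite_poly (Suc n) = [:0, 1:] * hermite_poly n - pderiv (hermite_poly n)"

declare hermite_poly.simps(2)[simp del]

lemma pderiv_hermite_poly_Suc: "pderiv (hermite_poly (Suc n)) = smult (Suc n) (hermite_poly n)"
proof (induction n)
  case 0
  then show ?case by (simp add: pderiv_pCons hermite_poly.simps(2))
next
  case (Suc n)
  let ?H = "hermite_poly (Suc n)"
  have "pderiv (hermite_poly (Suc (Suc n))) = ?H + [:0, 1:] * pderiv ?H - pderiv (pderiv ?H)"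
    by (simp add: hermite_poly.simps(2)[of "Suc n"] pderiv_diff pderiv_mult pderiv_pCons)
  also have "\<dots> = ?H + smult (Suc n) ([:0, 1:] * hermite_poly n - pderiv (hermite_poly n))"
    by (simp add: Suc pderiv_smult algebra_simps smult_diff_right)
  also have "\<dots> = smult (Suc (Suc n)) ?H"
    using smult_add_left[of "real (Suc n)" 1 ?H] by (simp add: hermite_poly.simps(2) add.commute)
  finally show ?case .
qed

lemma pderiv_hermite_poly: "pderiv (hermite_poly n) = smult n (hermite_poly (n - 1))"
  by (cases n) (simp_all add: pderiv_hermite_poly_Suc)

lemma x_times_hermite_poly:
  "y * poly (hermite_poly n) y = poly (hermite_poly (Suc n)) y + n * poly (hermite_poly (n - 1)) y"
  by (simp add: hermite_poly.simps(2) pderiv_hermite_poly)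

lemma higher_deriv_gauss:
  "(deriv ^^ n) (\<lambda>z. exp (- (z^2) / 2)) = (\<lambda>z. (-1)^n * poly (hermite_poly n) z * exp (- (z^2) / 2))"
proof (induction n)
  case (Suc n)
  have "((\<lambda>z. (-1)^n * poly (hermite_poly n) z * exp (- (z^2) / 2)) has_real_derivative
          (-1)^Suc n * poly (hermite_poly (Suc n)) z * exp (- (z^2) / 2)) (at z)" for z
    by (auto intro!: derivative_eq_intros simp: hermite_poly.simps(2) algebra_simps)
  then show ?case
    unfolding funpow.simps o_apply Suc by (intro ext DERIV_imp_deriv)
qed simp

lemma hermite_eq_poly_hermite_poly: "hermite n y = poly (hermite_poly n) y"
proof -
  have "exp (y^2 / 2) * exp (- (y^2) / 2) = 1"
    by (simp add: exp_add[symmetric])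
  then show ?thesis
    unfolding hermite_def higher_deriv_gauss
    by (simp add: power_mult_distrib[symmetric] mult_ac)
qed

lemma gauss1_eq_std_normal_density: "gauss1 = std_normal_density"
  by (simp add: fun_eq_iff gauss1_def std_normal_density_def)

lemma gauss1_pos: "0 < gauss1 y"
  by (simp add: gauss1_def)

lemma integral_std_normal_moment_Suc_Suc:
  "(\<integral>x. std_normal_density x * x ^ Suc (Suc k) \<partial>lborel)
     = Suc k * (\<integral>x. std_normal_density x * x ^ k \<partial>lborel)"
proof (cases "even k")
  case True
  then obtain j where k: "k = 2 * j" by (auto elim: evenE)
  have "Suc (Suc k) = 2 * Suc j" using k by simp
  then have "(\<integral>x. std_normal_density x * x ^ Suc (Suc k) \<partial>lborel)
      = fact (2 * Suc j) / (2 ^ Suc j * fact (Suc j))"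
    by (simp only: integral_std_normal_moment_even)
  also have "\<dots> = Suc k * (fact (2 * j) / (2 ^ j * fact j))"
  proof -
    have a: "(fact (2 * Suc j) :: real) = (2 * j + 2) * (2 * j + 1) * fact (2 * j)"
      and b: "(fact (Suc j) :: real) = (j + 1) * fact j"
      by (simp_all add: algebra_simps)
    have "(fact j :: real) > 0" by simp
    then show ?thesis unfolding a b k
      by (simp add: divide_simps add_pos_nonneg[THEN less_imp_neq, symmetric]) (simp add: algebra_simps)
  qed
  finally show ?thesis
    by (simp add: k integral_std_normal_moment_even)
next
  case False
  then obtain j where "k = 2 * j + 1" by (metis oddE)
  moreover have "Suc (Suc (2 * j + 1)) = 2 * Suc j + 1" by simp
  ultimately show ?thesis
    by (simp only: integral_std_normal_moment_odd)
qed

lemma integrable_poly_gauss1: "integrable lborel (\<lambda>x. poly p x * gauss1 x)"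
proof -
  have "(\<lambda>x. poly p x * gauss1 x) = (\<lambda>x. \<Sum>i\<le>degree p. coeff p i * (std_normal_density x * x^i))"
    by (simp add: fun_eq_iff poly_altdef gauss1_eq_std_normal_density sum_distrib_left
        sum_distrib_right mult_ac)
  then show ?thesis
    by (simp add: integrable_std_normal_moment)
qed

definition gauss_int :: "real poly \<Rightarrow> real" where
  "gauss_int p = (\<integral>x. poly p x * gauss1 x \<partial>lborel)"

lemma gauss_int_add: "gauss_int (p + q) = gauss_int p + gauss_int q"
  unfolding gauss_int_def by (simp add: distrib_right integrable_poly_gauss1)

lemma gauss_int_diff: "gauss_int (p - q) = gauss_int p - gauss_int q"
  unfolding gauss_int_def by (simp add: left_diff_distrib integrable_poly_gauss1)

lemma gauss_int_smult: "gauss_int (smult c p) = c * gauss_int p"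
  unfolding gauss_int_def by (simp add: mult.assoc)

lemma gauss_int_sum: "gauss_int (\<Sum>i\<in>A. p i) = (\<Sum>i\<in>A. gauss_int (p i))"
  by (induction A rule: infinite_finite_induct) (simp_all add: gauss_int_add, simp_all add: gauss_int_def)

lemma gauss_int_monom: "gauss_int (monom c n) = c * (\<integral>x. std_normal_density x * x^n \<partial>lborel)"
  unfolding gauss_int_def by (simp add: poly_monom gauss1_eq_std_normal_density mult_ac)

lemma gauss_int_stein: "gauss_int ([:0, 1:] * p) = gauss_int (pderiv p)"
proof -
  have monom: "gauss_int ([:0, 1:] * monom c n) = gauss_int (pderiv (monom c n))" for c n
  proof (cases n)
    case 0
    then show ?thesis
      using integral_std_normal_moment_odd[of 0]
      by (simp add: monom_Suc[symmetric] gauss_int_monom pderiv_monom) (simp add: gauss_int_def)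
  next
    case (Suc k)
    then show ?thesis
      using integral_std_normal_moment_Suc_Suc[of k]
      by (simp add: monom_Suc[symmetric] pderiv_monom gauss_int_monom del: power_Suc)
  qed
  have p: "p = (\<Sum>i\<le>degree p. monom (coeff p i) i)"
    by (rule poly_as_sum_of_monoms[symmetric])
  have "gauss_int ([:0, 1:] * p) = (\<Sum>i\<le>degree p. gauss_int ([:0, 1:] * monom (coeff p i) i))"
    by (subst p) (simp add: sum_distrib_left gauss_int_sum)
  also have "\<dots> = gauss_int (pderiv p)"
    using higher_pderiv_sum[of 1 "\<lambda>i. monom (coeff p i) i" "{..degree p}"]
    by (subst (3) p) (simp add: monom[simplified] gauss_int_sum)
  finally show ?thesis .
qed

lemma gauss_int_hermite_poly_sq: "gauss_int (hermite_poly n * hermite_poly n) = fact n"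
proof (induction n)
  case 0
  then show ?case
    using integral_std_normal_moment_even[of 0] by (simp add: gauss_int_def gauss1_eq_std_normal_density)
next
  case (Suc n)
  let ?H = "hermite_poly"
  have "?H (Suc n) * ?H (Suc n) = [:0, 1:] * (?H n * ?H (Suc n)) - pderiv (?H n) * ?H (Suc n)"
    by (subst (1) hermite_poly.simps(2)) (simp add: algebra_simps)
  then have "gauss_int (?H (Suc n) * ?H (Suc n))
      = gauss_int ([:0, 1:] * (?H n * ?H (Suc n))) - gauss_int (pderiv (?H n) * ?H (Suc n))"
    by (simp only: gauss_int_diff)
  also have "\<dots> = gauss_int (?H n * pderiv (?H (Suc n)))"
    unfolding gauss_int_stein pderiv_mult gauss_int_add by (simp add: mult.commute)
  also have "\<dots> = Suc n * gauss_int (?H n * ?H n)"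
    by (simp add: pderiv_hermite_poly_Suc gauss_int_smult)
  finally show ?case
    using Suc by simp
qed

section \<open>Tensor products of functions of one variable\<close>

definition tensor :: "('d::finite \<Rightarrow> real \<Rightarrow> real) \<Rightarrow> real^'d \<Rightarrow> real" where
  "tensor U x = (\<Prod>k\<in>UNIV. U k (x$k))"

lemma tensor_fun_upd: "tensor (U(i := V)) x = V (x$i) * (\<Prod>k\<in>UNIV-{i}. U k (x$k))"
  unfolding tensor_def by (subst prod.remove[of _ i]) (auto intro!: prod.cong)

lemma tensor_split: "tensor U x = U i (x$i) * (\<Prod>k\<in>UNIV-{i}. U k (x$k))"
  using tensor_fun_upd[of U i "U i" x] by simp

lemma tensor_mult: "tensor (\<lambda>k y. U k y * V k y) x = tensor U x * tensor V x"
  by (simp add: tensor_def prod.distrib)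

lemma tensor_abs_le:
  assumes "\<And>k y. \<bar>U k y\<bar> \<le> E k y"
  shows "\<bar>tensor U x\<bar> \<le> tensor E x"
  unfolding tensor_def abs_prod by (rule prod_mono) (use assms in auto)

lemma abs_tensor_le_weighted:
  assumes "\<And>k y. (1 + \<bar>y\<bar>) * \<bar>V k y\<bar> \<le> E k y"
  shows "\<bar>tensor V x\<bar> \<le> tensor E x" and "\<bar>x$l * tensor V x\<bar> \<le> tensor E x"
proof -
  have weighted: "(1 + \<bar>y\<bar>) * \<bar>V k y\<bar> \<le> E k y" for k y
    by (rule assms)
  have le: "\<bar>V k y\<bar> \<le> E k y" "\<bar>y * V k y\<bar> \<le> E k y" for k y
    by (rule order_trans[OF _ weighted], simp add: distrib_right abs_mult)+
  show "\<bar>tensor V x\<bar> \<le> tensor E x"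
    by (rule tensor_abs_le) (rule le(1))
  \<comment> \<open>A coordinate factor is absorbed into the corresponding one-variable factor.\<close>
  have "x$l * tensor V x = tensor (V(l := \<lambda>y. y * V l y)) x"
    by (simp add: tensor_fun_upd tensor_split[of V x l])
  also have "\<bar>\<dots>\<bar> \<le> tensor E x"
    by (rule tensor_abs_le) (simp add: le)
  finally show "\<bar>x$l * tensor V x\<bar> \<le> tensor E x" .
qed

lemma continuous_on_tensor:
  assumes "\<And>k. continuous_on UNIV (U k)"
  shows "continuous_on UNIV (tensor U)"
  unfolding tensor_def[abs_def] by (intro continuous_intros continuous_on_compose2[OF assms]) auto

lemma borel_measurable_tensor:
  assumes "\<And>k. continuous_on UNIV (U k)"
  shows "tensor U \<in> borel_measurable borel"
  by (rule borel_measurable_continuous_onI[OF continuous_on_tensor[OF assms]])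

lemma tendsto_tensor:
  assumes "\<And>k y. (\<lambda>n. U n k y) \<longlonglongrightarrow> L k y"
  shows "(\<lambda>n. tensor (U n) x) \<longlonglongrightarrow> tensor L x"
  unfolding tensor_def by (rule tendsto_prod) (rule assms)

lemma nn_integral_lborel_tensor:
  fixes h :: "'d::finite \<Rightarrow> real \<Rightarrow> ennreal"
  assumes [measurable]: "\<And>k. h k \<in> borel_measurable borel"
  shows "(\<integral>\<^sup>+x. (\<Prod>k\<in>UNIV. h k (x$k)) \<partial>(lborel :: (real^'d) measure))
    = (\<Prod>k\<in>UNIV. (\<integral>\<^sup>+y. h k y \<partial>lborel))"
proof -
  have Basis: "(Basis :: (real^'d) set) = range (\<lambda>k. axis k 1)"
    by (auto simp: Basis_vec_def)
  have inj: "inj (\<lambda>k::'d. axis k (1::real))"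
    by (auto simp: inj_def axis_eq_axis)
  define index where "index b = (SOME k. axis k (1::real) = (b::real^'d))" for b
  have index: "index (axis k 1) = k" for k
    unfolding index_def by (rule someI2[of _ k]) (auto simp: axis_eq_axis)
  have "(\<integral>\<^sup>+x. (\<Prod>b\<in>Basis. h (index b) (x \<bullet> b)) \<partial>(lborel :: (real^'d) measure))
      = (\<Prod>b\<in>Basis. (\<integral>\<^sup>+y. h (index b) y \<partial>lborel))"
    by (rule nn_integral_lborel_prod) auto
  then show ?thesis
    unfolding Basis by (simp add: prod.reindex[OF inj] index cart_eq_inner_axis[symmetric])
qed

lemma integrable_tensor:
  fixes U :: "'d::finite \<Rightarrow> real \<Rightarrow> real"
  assumes "\<And>k. integrable lborel (U k)"
  shows "integrable lborel (tensor U)"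
proof (subst integrable_iff_bounded, intro conjI)
  have [measurable]: "U k \<in> borel_measurable borel" for k
    using assms[of k] by auto
  show "tensor U \<in> borel_measurable lborel"
    unfolding tensor_def[abs_def] by measurable
  have "(\<integral>\<^sup>+x. ennreal (norm (tensor U x)) \<partial>lborel)
      = (\<integral>\<^sup>+x. (\<Prod>k\<in>UNIV. ennreal (norm (U k (x$k)))) \<partial>(lborel :: (real^'d) measure))"
    by (simp add: tensor_def abs_prod prod_ennreal)
  also have "\<dots> = (\<Prod>k\<in>UNIV. (\<integral>\<^sup>+y. ennreal (norm (U k y)) \<partial>lborel))"
    by (rule nn_integral_lborel_tensor) measurable
  also have "\<dots> < \<infinity>"
    using assms by (simp add: less_top[symmetric] ennreal_prod_eq_top integrable_iff_bounded)
  finally show "(\<integral>\<^sup>+x. ennreal (norm (tensor U x)) \<partial>lborel) < \<infinity>" .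
qed

lemma integral_tensor_nonneg:
  fixes U :: "'d::finite \<Rightarrow> real \<Rightarrow> real"
  assumes "\<And>k. integrable lborel (U k)" and "\<And>k y. 0 \<le> U k y"
  shows "(\<integral>x. tensor U x \<partial>lborel) = (\<Prod>k\<in>UNIV. (\<integral>y. U k y \<partial>lborel))"
proof -
  have [measurable]: "U k \<in> borel_measurable borel" for k
    using assms(1)[of k] by auto
  have "integrable lborel (tensor U)"
    by (rule integrable_tensor) (rule assms(1))
  then have "ennreal (\<integral>x. tensor U x \<partial>lborel) = (\<integral>\<^sup>+x. ennreal (tensor U x) \<partial>lborel)"
    using assms(2) by (subst nn_integral_eq_integral) (auto simp: tensor_def prod_nonneg)
  also have "\<dots> = (\<integral>\<^sup>+x. (\<Prod>k\<in>UNIV. ennreal (U k (x$k))) \<partial>(lborel :: (real^'d) measure))"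
    using assms(2) by (simp add: tensor_def prod_ennreal)
  also have "\<dots> = (\<Prod>k\<in>UNIV. (\<integral>\<^sup>+y. ennreal (U k y) \<partial>lborel))"
    by (rule nn_integral_lborel_tensor) measurable
  also have "\<dots> = (\<Prod>k\<in>UNIV. ennreal (\<integral>y. U k y \<partial>lborel))"
    using assms by (simp add: nn_integral_eq_integral)
  also have "\<dots> = ennreal (\<Prod>k\<in>UNIV. (\<integral>y. U k y \<partial>lborel))"
    using assms by (simp add: prod_ennreal integral_nonneg_AE)
  finally show ?thesis
    using assms by (simp add: tensor_def prod_nonneg integral_nonneg_AE ennreal_inj)
qed

lemma finf_eq_tensor_gauss1: "finf = tensor (\<lambda>_. gauss1)"
proof
  fix x :: "real^'d"
  have "exp (- ((norm x)^2) / 2) = (\<Prod>k\<in>UNIV. exp (- ((x$k)^2) / 2))"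
    unfolding power2_norm_eq_inner
    by (simp add: inner_vec_def power2_eq_square exp_sum[symmetric] sum_divide_distrib sum_negf)
  moreover have "(\<Prod>k\<in>(UNIV::'d set). sqrt (2*pi)) = (2*pi) powr (real CARD('d) / 2)"
    by (simp add: powr_half_sqrt[symmetric] powr_power)
  ultimately show "finf x = tensor (\<lambda>_. gauss1) x"
    unfolding finf_def tensor_def gauss1_def prod_dividef by (simp add: powr_minus divide_simps)
qed

lemma finf_pos: "0 < finf x"
  by (simp add: finf_def)

lemma borel_measurable_finf [measurable]: "finf \<in> borel_measurable borel"
  unfolding finf_def[abs_def] by measurable

lemma integrable_tensor_finf:
  assumes "\<And>k. integrable lborel (\<lambda>y. U k y * gauss1 y)"
  shows "integrable lborel (\<lambda>x. tensor U x * finf x)"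
  using integrable_tensor[of "\<lambda>k y. U k y * gauss1 y", OF assms]
  by (simp add: finf_eq_tensor_gauss1 tensor_mult[symmetric])

lemma integrable_mult_inH:
  assumes "inH u" and [measurable]: "w \<in> borel_measurable borel"
    and "integrable lborel (\<lambda>x. (w x)^2 * finf x)"
  shows "integrable lborel (\<lambda>x. u x * w x)"
proof (rule Bochner_Integration.integrable_bound)
  show "integrable lborel (\<lambda>x. (u x)^2 / finf x + (w x)^2 * finf x)"
    using assms(1,3) unfolding inH_def by auto
  have [measurable]: "u \<in> borel_measurable borel"
    using assms(1) by (simp add: inH_def)
  show "(\<lambda>x. u x * w x) \<in> borel_measurable lborel"
    by measurable
  have "norm (u x * w x) \<le> norm ((u x)^2 / finf x + (w x)^2 * finf x)" for x
  proof -
    have "0 \<le> (\<bar>u x\<bar> - \<bar>w x\<bar> * finf x)^2 / finf x"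
      using finf_pos[of x] by simp
    also have "\<dots> = (u x)^2 / finf x - 2 * \<bar>u x * w x\<bar> + (w x)^2 * finf x"
      using finf_pos[of x] by (simp add: power2_eq_square field_simps abs_mult)
    finally show ?thesis
      using finf_pos[of x] by simp
  qed
  then show "AE x in lborel. norm (u x * w x) \<le> norm ((u x)^2 / finf x + (w x)^2 * finf x)"
    by simp
qed

lemma integrable_Hinner:
  assumes "inH u" "inH w"
  shows "integrable lborel (\<lambda>x. u x * w x / finf x)"
proof -
  have [measurable]: "w \<in> borel_measurable borel"
    using assms(2) by (simp add: inH_def)
  have "(w x / finf x)^2 * finf x = (w x)^2 / finf x" for x
    using finf_pos[of x] by (simp add: power2_eq_square)
  then have sq: "integrable lborel (\<lambda>x. (w x / finf x)^2 * finf x)"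
    using assms(2) by (simp add: inH_def)
  have "integrable lborel (\<lambda>x. u x * (w x / finf x))"
    by (rule integrable_mult_inH[OF assms(1) _ sq]) measurable
  then show ?thesis
    by simp
qed

lemma inH_lincomb:
  assumes "inH u" "inH v"
  shows "inH (\<lambda>x. a * u x + b * v x)"
  unfolding inH_def
proof
  have [measurable]: "u \<in> borel_measurable borel" "v \<in> borel_measurable borel"
    using assms by (simp_all add: inH_def)
  show "(\<lambda>x. a * u x + b * v x) \<in> borel_measurable lborel"
    by measurable
  have eq: "(\<lambda>x. (a * u x + b * v x)^2 / finf x)
      = (\<lambda>x. a^2 * ((u x)^2 / finf x) + 2 * a * b * (u x * v x / finf x) + b^2 * ((v x)^2 / finf x))"
    by (simp add: fun_eq_iff power2_eq_square add_divide_distrib algebra_simps)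
  have "integrable lborel (\<lambda>x. a^2 * ((u x)^2 / finf x))"
    by (rule integrable_mult_right) (use assms(1) in \<open>simp add: inH_def\<close>)
  moreover have "integrable lborel (\<lambda>x. 2 * a * b * (u x * v x / finf x))"
    by (rule integrable_mult_right[OF integrable_Hinner[OF assms]])
  moreover have "integrable lborel (\<lambda>x. b^2 * ((v x)^2 / finf x))"
    by (rule integrable_mult_right) (use assms(2) in \<open>simp add: inH_def\<close>)
  ultimately show "integrable lborel (\<lambda>x. (a * u x + b * v x)^2 / finf x)"
    unfolding eq by (intro Bochner_Integration.integrable_add)
qed

lemma Hinner_nonneg: "0 \<le> Hinner u u"
  unfolding Hinner_def by (intro integral_nonneg_AE AE_I2 divide_nonneg_pos finf_pos) simp

lemma Hinner_Cauchy_Schwarz: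
  assumes "inH u" "inH v"
  shows "\<bar>Hinner u v\<bar> \<le> Hnorm u * Hnorm v"
proof -
  have [measurable]: "u \<in> borel_measurable borel" "v \<in> borel_measurable borel"
    using assms by (simp_all add: inH_def)
  define U where "U x = \<bar>u x\<bar> / sqrt (finf x)" for x
  define V where "V x = \<bar>v x\<bar> / sqrt (finf x)" for x
  have [measurable]: "U \<in> borel_measurable borel" "V \<in> borel_measurable borel"
    unfolding U_def[abs_def] V_def[abs_def] by measurable
  have U0: "0 \<le> U x" and V0: "0 \<le> V x" for x
    using finf_pos[of x] by (simp_all add: U_def V_def)
  have UV: "U x * V x = \<bar>u x * v x / finf x\<bar>" for x
    using finf_pos[of x] by (simp add: U_def V_def abs_mult)
  have U2: "(U x)^2 = (u x)^2 / finf x" and V2: "(V x)^2 = (v x)^2 / finf x" for x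
    using finf_pos[of x] by (simp_all add: U_def V_def power_divide)
  have iUV: "integrable lborel (\<lambda>x. U x * V x)"
    unfolding UV by (intro integrable_abs integrable_Hinner assms)
  have iU2: "integrable lborel (\<lambda>x. (U x)^2)" and iV2: "integrable lborel (\<lambda>x. (V x)^2)"
    using assms by (simp_all add: U2 V2 inH_def)
  have I0: "0 \<le> (\<integral>x. U x * V x \<partial>lborel)" "0 \<le> (\<integral>x. (U x)^2 \<partial>lborel)"
    "0 \<le> (\<integral>x. (V x)^2 \<partial>lborel)"
    using U0 V0 by (auto intro!: integral_nonneg_AE)
  have "ennreal (\<integral>x. U x * V x \<partial>lborel) = (\<integral>\<^sup>+x. ennreal (U x * V x) \<partial>lborel)"
    by (rule nn_integral_eq_integral[symmetric]) (auto simp: iUV U0 V0)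
  then have "ennreal ((\<integral>x. U x * V x \<partial>lborel)^2) = (\<integral>\<^sup>+x. ennreal (U x) * ennreal (V x) \<partial>lborel)^2"
    using U0 V0 I0 by (simp add: ennreal_mult flip: ennreal_power)
  also have "\<dots> \<le> (\<integral>\<^sup>+x. ennreal (U x) ^ 2 \<partial>lborel) * (\<integral>\<^sup>+x. ennreal (V x) ^ 2 \<partial>lborel)"
    by (rule Cauchy_Schwarz_nn_integral) measurable
  also have "\<dots> = ennreal (\<integral>x. (U x)^2 \<partial>lborel) * ennreal (\<integral>x. (V x)^2 \<partial>lborel)"
    using U0 V0 by (simp add: ennreal_power nn_integral_eq_integral iU2 iV2)
  also have "\<dots> = ennreal ((\<integral>x. (U x)^2 \<partial>lborel) * (\<integral>x. (V x)^2 \<partial>lborel))"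
    by (rule ennreal_mult[symmetric, OF I0(2,3)])
  finally have CS: "(\<integral>x. U x * V x \<partial>lborel)^2 \<le> (\<integral>x. (U x)^2 \<partial>lborel) * (\<integral>x. (V x)^2 \<partial>lborel)"
    using I0 by (subst (asm) ennreal_le_iff) auto
  have "\<bar>Hinner u v\<bar> \<le> (\<integral>x. U x * V x \<partial>lborel)"
    unfolding Hinner_def UV by (rule integral_abs_bound)
  also have "\<dots> \<le> sqrt ((\<integral>x. (U x)^2 \<partial>lborel) * (\<integral>x. (V x)^2 \<partial>lborel))"
    by (rule real_le_rsqrt[OF CS])
  also have "\<dots> = Hnorm u * Hnorm v"
    unfolding Hnorm_def Hinner_def U2 V2 by (simp add: power2_eq_square real_sqrt_mult)
  finally show ?thesis .
qed

lemma has_real_derivative_Hinner: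
  assumes fH: "\<And>s. 0 < s \<Longrightarrow> inH (f s)" and f'H: "inH f'" and gH: "inH g" and "0 < t"
    and lim: "((\<lambda>h. Hnorm (\<lambda>x. (f (t + h) x - f t x) / h - f' x)) \<longlongrightarrow> 0) (at 0)"
  shows "((\<lambda>s. Hinner (f s) g) has_real_derivative Hinner f' g) (at t)"
proof -
  define q where "q h = (\<lambda>x. (f (t + h) x - f t x) / h - f' x)" for h
  have "\<bar>(Hinner (f (t + h)) g - Hinner (f t) g) / h - Hinner f' g\<bar> \<le> Hnorm (q h) * Hnorm g"
    if "h \<noteq> 0" "\<bar>h\<bar> < t" for h
  proof -
    have ftH: "inH (f (t + h))" "inH (f t)"
      using that \<open>0 < t\<close> by (auto intro: fH)
    have "q h = (\<lambda>x. 1 * ((1 / h) * f (t + h) x + (- 1 / h) * f t x) + (- 1) * f' x)"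
      by (simp add: q_def fun_eq_iff diff_divide_distrib)
    then have "inH (q h)"
      by (simp only: inH_lincomb ftH f'H)
    moreover have "Hinner (q h) g = (Hinner (f (t + h)) g - Hinner (f t) g) / h - Hinner f' g"
    proof -
      have "q h x * g x / finf x
          = (f (t + h) x * g x / finf x - f t x * g x / finf x) / h - f' x * g x / finf x" for x
        using that(1) finf_pos[of x] by (simp add: q_def field_simps)
      then show ?thesis
        unfolding Hinner_def using integrable_Hinner[OF _ gH] ftH f'H by simp
    qed
    ultimately show ?thesis
      using Hinner_Cauchy_Schwarz[OF _ gH] by metis
  qed
  then have "\<forall>\<^sub>F h in at 0. norm ((Hinner (f (t + h)) g - Hinner (f t) g) / h - Hinner f' g)
      \<le> norm (Hnorm (q h)) * Hnorm g"
    unfolding eventually_at using \<open>0 < t\<close>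
    by (intro exI[of _ t]) (auto simp: Hnorm_def Hinner_nonneg)
  moreover have "((\<lambda>h. Hnorm (q h)) \<longlongrightarrow> 0) (at 0)"
    using lim by (simp add: q_def)
  ultimately have "((\<lambda>h. (Hinner (f (t + h)) g - Hinner (f t) g) / h - Hinner f' g) \<longlongrightarrow> 0) (at 0)"
    by (rule tendsto_0_le[rotated])
  then show ?thesis
    unfolding DERIV_def by (simp add: LIM_zero_iff)
qed

definition hermite_tensor :: "('d::finite \<Rightarrow> nat) \<Rightarrow> real^'d \<Rightarrow> real" where
  "hermite_tensor \<alpha> = tensor (\<lambda>k. poly (hermite_poly (\<alpha> k)))"

lemma g_alpha_eq_hermite_tensor: "g_alpha \<alpha> x = hermite_tensor \<alpha> x * finf x"
  unfolding g_alpha_def hermite_tensor_def finf_eq_tensor_gauss1 hermite_eq_poly_hermite_poly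
  by (simp add: tensor_def prod.distrib)

lemma borel_measurable_hermite_tensor [measurable]: "hermite_tensor \<alpha> \<in> borel_measurable borel"
  unfolding hermite_tensor_def by (rule borel_measurable_tensor) (intro continuous_intros)

lemma integrable_hermite_tensor_sq: "integrable lborel (\<lambda>x. (hermite_tensor \<alpha> x)^2 * finf x)"
proof -
  have "integrable lborel
      (\<lambda>x. tensor (\<lambda>k y. poly (hermite_poly (\<alpha> k)) y * poly (hermite_poly (\<alpha> k)) y) x * finf x)"
    by (rule integrable_tensor_finf) (rule integrable_poly_gauss1[of "_ * _", simplified])
  then show ?thesis
    by (simp add: hermite_tensor_def tensor_mult[symmetric] power2_eq_square)
qed

lemma inH_g_alpha: "inH (g_alpha \<alpha>)"
proof -
  have "(g_alpha \<alpha> x)^2 / finf x = (hermite_tensor \<alpha> x)^2 * finf x" for x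
    using finf_pos[of x] by (simp add: g_alpha_eq_hermite_tensor power2_eq_square)
  then show ?thesis
    unfolding inH_def g_alpha_eq_hermite_tensor by (simp add: integrable_hermite_tensor_sq)
qed

lemma Hinner_g_alpha: "Hinner u (g_alpha \<alpha>) = (\<integral>x. u x * hermite_tensor \<alpha> x \<partial>lborel)"
proof -
  have "u x * g_alpha \<alpha> x / finf x = u x * hermite_tensor \<alpha> x" for x
    using finf_pos[of x] by (simp add: g_alpha_eq_hermite_tensor)
  then show ?thesis
    by (simp add: Hinner_def)
qed

lemma Hnorm_g_alpha_sq: "(Hnorm (g_alpha \<alpha>))^2 = (\<Prod>k\<in>UNIV. fact (\<alpha> k))"
proof -
  let ?U = "\<lambda>k y. poly (hermite_poly (\<alpha> k) * hermite_poly (\<alpha> k)) y * gauss1 y"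
  have "Hinner (g_alpha \<alpha>) (g_alpha \<alpha>) = (\<integral>x. tensor ?U x \<partial>lborel)"
    by (simp add: Hinner_g_alpha g_alpha_eq_hermite_tensor hermite_tensor_def finf_eq_tensor_gauss1
        tensor_mult[symmetric] mult_ac)
  also have "\<dots> = (\<Prod>k\<in>UNIV. gauss_int (hermite_poly (\<alpha> k) * hermite_poly (\<alpha> k)))"
    unfolding gauss_int_def
    by (rule integral_tensor_nonneg)
      (auto simp: integrable_poly_gauss1[of "_ * _", simplified] gauss1_pos less_imp_le)
  finally show ?thesis
    by (simp add: Hnorm_def gauss_int_hermite_poly_sq prod_nonneg)
qed

lemma hcoeff_div_multinom: "hcoeff u \<beta> / multinom \<beta> = Hinner u (g_alpha \<beta>) / fact (mabs \<beta>)"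
proof -
  have "(\<Prod>k\<in>UNIV. fact (\<beta> k) :: real) \<noteq> 0"
    by (simp add: prod_zero_iff)
  then show ?thesis
    unfolding hcoeff_def Hnorm_g_alpha_sq multinom_def by simp
qed

lemma pd_eqI: "((\<lambda>s. F (x + s *\<^sub>R axis i 1)) has_real_derivative D) (at 0) \<Longrightarrow> pd i F x = D"
  unfolding pd_def by (rule DERIV_imp_deriv)

lemma has_real_derivative_tensor_line:
  assumes "(U i has_real_derivative D) (at (x$i))"
  shows "((\<lambda>s. tensor U (x + s *\<^sub>R axis i 1)) has_real_derivative D * (\<Prod>k\<in>UNIV-{i}. U k (x$k))) (at 0)"
proof -
  have "tensor U (x + s *\<^sub>R axis i 1) = U i (x$i + s) * (\<Prod>k\<in>UNIV-{i}. U k (x$k))" for s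
    by (subst tensor_split[of _ _ i]) (auto simp: axis_def intro!: prod.cong)
  moreover have "((\<lambda>s. U i (x$i + s)) has_real_derivative D * 1) (at 0)"
    by (rule DERIV_chain2[where f = "U i"]) (auto intro!: derivative_eq_intros simp: assms)
  ultimately show ?thesis
    by (auto intro!: derivative_eq_intros)
qed

lemma pd_tensor:
  assumes "\<And>y. (U i has_real_derivative U' y) (at y)"
  shows "pd i (tensor U) = tensor (U(i := U'))"
  by (rule ext, unfold tensor_fun_upd) (rule pd_eqI, rule has_real_derivative_tensor_line, rule assms)

lemma tensor_differentiable:
  assumes "\<And>k y. (U k has_real_derivative U' k y) (at y)"
  shows "tensor U differentiable (at x)"
proof -
  have "((\<lambda>x. U k (x$k)) has_derivative (\<lambda>h. U' k (x$k) * h$k)) (at x)" for k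
    using has_derivative_compose[OF bounded_linear_imp_has_derivative[OF bounded_linear_vec_nth]
        assms[of k "x$k", unfolded has_field_derivative_def]]
    by simp
  then have "((\<lambda>x. \<Prod>k\<in>UNIV. U k (x$k)) has_derivative
      (\<lambda>h. \<Sum>i\<in>UNIV. U' i (x$i) * h$i * (\<Prod>j\<in>UNIV - {i}. U j (x$j)))) (at x)"
    by (intro has_derivative_prod) auto
  then show ?thesis
    unfolding tensor_def[abs_def] by (rule differentiableI)
qed

lemma test_fun_tensor:
  assumes d1: "\<And>k y. (U k has_real_derivative U1 k y) (at y)"
    and d2: "\<And>k y. (U1 k has_real_derivative U2 k y) (at y)"
    and cont: "\<And>k. continuous_on UNIV (U2 k)"
    and supp: "\<And>k y. R < \<bar>y\<bar> \<Longrightarrow> U k y = 0"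
  shows "test_fun (tensor U)"
  unfolding test_fun_def
proof (intro conjI allI impI)
  have cU: "continuous_on UNIV (U k)" "continuous_on UNIV (U1 k)" for k
    using d1 d2 by (auto intro!: continuous_at_imp_continuous_on DERIV_isCont)
  have pd1: "pd i (tensor U) = tensor (U(i := U1 i))" for i
    by (rule pd_tensor[OF d1])
  have pd2: "pd j (pd i (tensor U)) = tensor ((U(i := U1 i))(j := if j = i then U2 i else U1 j))" for i j
    unfolding pd1 by (rule pd_tensor) (auto simp: d1 d2)
  show "\<exists>R. \<forall>x. R < norm x \<longrightarrow> tensor U x = 0"
  proof (intro exI allI impI)
    fix x :: "real^'a"
    assume "\<bar>R\<bar> * CARD('a) < norm x"
    then have "(\<Sum>k\<in>(UNIV::'a set). \<bar>R\<bar>) < (\<Sum>k\<in>UNIV. \<bar>x$k\<bar>)"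
      using norm_le_l1_cart[of x] by (simp add: mult.commute)
    then obtain k where "\<bar>R\<bar> < \<bar>x$k\<bar>"
      by (meson not_less sum_mono)
    then have "U k (x$k) = 0"
      by (intro supp) (meson abs_ge_self order_le_less_trans)
    then show "tensor U x = 0"
      unfolding tensor_def by (intro prod_zero) auto
  qed
  show "tensor U differentiable (at x)" for x
    by (rule tensor_differentiable[OF d1])
  show "pd i (tensor U) differentiable (at x)" for i x
    unfolding pd1 by (rule tensor_differentiable[where U' = "U1(i := U2 i)"]) (auto simp: d1 d2)
  show "continuous_on UNIV (pd j (pd i (tensor U)))" for i j
    unfolding pd2 by (rule continuous_on_tensor) (auto simp: cU cont)
qed

definition Lstar_formula ::
  "real^'d^'d \<Rightarrow> ('d \<Rightarrow> real \<Rightarrow> real) \<Rightarrow> ('d \<Rightarrow> real \<Rightarrow> real) \<Rightarrow> ('d \<Rightarrow> real \<Rightarrow> real) \<Rightarrow> real^'d \<Rightarrow> real"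
  where
  "Lstar_formula C U U1 U2 x =
     (\<Sum>i\<in>UNIV. \<Sum>j\<in>UNIV. sym_part C $ i $ j * tensor ((U(j := U1 j))(i := if i = j then U2 j else U1 i)) x)
     - (\<Sum>i\<in>UNIV. (C *v x) $ i * tensor (U(i := U1 i)) x)"

lemma Lstar_tensor:
  assumes d1: "\<And>k y. (U k has_real_derivative U1 k y) (at y)"
    and d2: "\<And>k y. (U1 k has_real_derivative U2 k y) (at y)"
  shows "Lstar C (tensor U) = Lstar_formula C U U1 U2"
proof -
  have pd1: "pd j (tensor U) = tensor (U(j := U1 j))" for j
    by (rule pd_tensor[OF d1])
  have pd2: "pd i (tensor (U(j := U1 j))) = tensor ((U(j := U1 j))(i := if i = j then U2 j else U1 i))" for i j
    by (rule pd_tensor) (auto simp: d1 d2)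
  show ?thesis
    unfolding Lstar_def Lstar_formula_def pd1 pd2 by simp
qed

section \<open>The adjoint operator on Hermite tensors\<close>

lemma hermite_tensor_fun_upd:
  "hermite_tensor (\<beta>(l := n)) x = poly (hermite_poly n) (x$l) * (\<Prod>k\<in>UNIV-{l}. poly (hermite_poly (\<beta> k)) (x$k))"
  unfolding hermite_tensor_def by (subst tensor_split[of _ _ l]) (auto intro!: prod.cong)

lemma has_real_derivative_hermite_tensor_line:
  "((\<lambda>s. hermite_tensor \<beta> (x + s *\<^sub>R axis i 1)) has_real_derivative \<beta> i * hermite_tensor (mminus \<beta> i) x) (at 0)"
  using has_real_derivative_tensor_line[where U = "\<lambda>k. poly (hermite_poly (\<beta> k))" and i = i and x = x, OF poly_DERIV]
  by (simp add: hermite_tensor_def[symmetric] mminus_def hermite_tensor_fun_upd pderiv_hermite_poly mult.assoc)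

lemma pd_hermite_tensor: "pd i (hermite_tensor \<beta>) = (\<lambda>x. \<beta> i * hermite_tensor (mminus \<beta> i) x)"
  by (rule ext, rule pd_eqI, rule has_real_derivative_hermite_tensor_line)

lemma pd_pd_hermite_tensor:
  "pd i (pd j (hermite_tensor \<alpha>)) x = \<alpha> j * (mminus \<alpha> j i * hermite_tensor (mminus (mminus \<alpha> j) i) x)"
  unfolding pd_hermite_tensor
  by (rule pd_eqI, rule DERIV_cmult, rule has_real_derivative_hermite_tensor_line)

lemma x_times_hermite_tensor:
  "x$l * hermite_tensor \<beta> x = hermite_tensor (mplus \<beta> l) x + \<beta> l * hermite_tensor (mminus \<beta> l) x"
  using hermite_tensor_fun_upd[of \<beta> l "\<beta> l" x]
  by (simp add: mplus_def mminus_def hermite_tensor_fun_upd x_times_hermite_poly algebra_simps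
      flip: mult.assoc)

lemma Lstar_hermite_tensor:
  "Lstar C (hermite_tensor \<alpha>) x
     = - (\<Sum>j\<in>UNIV. \<Sum>l\<in>UNIV. \<alpha> j * C $ j $ l * hermite_tensor (mplus (mminus \<alpha> j) l) x)"
proof -
  define T where "T i l = \<alpha> i * mminus \<alpha> i l * hermite_tensor (mminus (mminus \<alpha> i) l) x" for i l
  have T_sym: "T i l = T l i" for i l
    unfolding T_def by (cases "i = l") (auto simp: mminus_def fun_upd_twist)
  have S: "sym_part C $ i $ j = (C $ i $ j + C $ j $ i) / 2" for i j
    by (simp add: sym_part_def transpose_def)
  \<comment> \<open>The second-order term sees only the symmetric part of C and cancels the lowering
      summand that x_times_hermite_tensor produces in the drift term.\<close>
  have "(\<Sum>i\<in>UNIV. \<Sum>j\<in>UNIV. sym_part C $ i $ j * pd i (pd j (hermite_tensor \<alpha>)) x)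
      = (\<Sum>i\<in>UNIV. \<Sum>j\<in>UNIV. C $ i $ j * T i j) / 2 + (\<Sum>i\<in>UNIV. \<Sum>j\<in>UNIV. C $ j $ i * T i j) / 2"
    unfolding pd_pd_hermite_tensor S
    by (subst (1 2) T_sym)
      (simp add: T_def sum_divide_distrib sum.distrib[symmetric] add_divide_distrib algebra_simps)
  also have "(\<Sum>i\<in>UNIV. \<Sum>j\<in>UNIV. C $ j $ i * T i j) = (\<Sum>i\<in>UNIV. \<Sum>j\<in>UNIV. C $ i $ j * T i j)"
    by (subst sum.swap) (simp add: T_sym)
  finally have second_order: "(\<Sum>i\<in>UNIV. \<Sum>j\<in>UNIV. sym_part C $ i $ j * pd i (pd j (hermite_tensor \<alpha>)) x)
      = (\<Sum>i\<in>UNIV. \<Sum>l\<in>UNIV. C $ i $ l * T i l)"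
    by simp
  have "(\<Sum>i\<in>UNIV. (C *v x) $ i * pd i (hermite_tensor \<alpha>) x)
      = (\<Sum>i\<in>UNIV. \<Sum>l\<in>UNIV. C $ i $ l * \<alpha> i * (x $ l * hermite_tensor (mminus \<alpha> i) x))"
    unfolding pd_hermite_tensor by (simp add: matrix_vector_mult_def sum_distrib_left sum_distrib_right mult_ac)
  also have "\<dots> = (\<Sum>i\<in>UNIV. \<Sum>l\<in>UNIV. \<alpha> i * C $ i $ l * hermite_tensor (mplus (mminus \<alpha> i) l) x
      + C $ i $ l * T i l)"
    unfolding x_times_hermite_tensor T_def by (simp add: algebra_simps)
  finally show ?thesis
    unfolding Lstar_def second_order by (simp add: sum.distrib)
qed

section \<open>A \<open>C\<^sup>2\<close> cut-off function\<close>

lemma has_real_derivative_max0_power: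
  fixes s :: real
  assumes "1 \<le> n"
  shows "((\<lambda>s. (max 0 s) ^ Suc n) has_real_derivative real (Suc n) * (max 0 s) ^ n) (at s)"
proof (cases s "0 :: real" rule: linorder_cases)
  case less
  have "((\<lambda>s. 0) has_real_derivative 0) (at s)"
    by simp
  then have "((\<lambda>s. (max 0 s) ^ Suc n) has_real_derivative 0) (at s)"
    by (rule has_field_derivative_transform_within_open[where S = "{..<0}"]) (use less in auto)
  then show ?thesis
    using less assms by (simp add: power_0_left)
next
  case greater
  have "((\<lambda>s. s ^ Suc n) has_real_derivative real (Suc n) * s ^ n) (at s)"
    using DERIV_pow[of "Suc n" s] by simp
  then have "((\<lambda>s. (max 0 s) ^ Suc n) has_real_derivative real (Suc n) * s ^ n) (at s)"
    by (rule has_field_derivative_transform_within_open[where S = "{0<..}"]) (use greater in auto)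
  then show ?thesis
    using greater by simp
next
  case equal
  have "isCont (\<lambda>h. (max 0 h) ^ n) (0::real)"
    by (intro continuous_intros)
  then have lim: "((\<lambda>h. (max 0 h) ^ n) \<longlongrightarrow> 0) (at (0::real))"
    using assms by (simp add: isCont_def power_0_left)
  have "\<forall>h::real. norm ((max 0 h) ^ Suc n / h) \<le> norm ((max 0 h) ^ n) * 1"
  proof
    fix h :: real
    show "norm ((max 0 h) ^ Suc n / h) \<le> norm ((max 0 h) ^ n) * 1"
      by (cases "h \<le> 0") (simp_all add: max_def)
  qed
  then have "((\<lambda>h. (max 0 h) ^ Suc n / h) \<longlongrightarrow> 0) (at (0::real))"
    by (rule tendsto_0_le[OF lim always_eventually])
  then show ?thesis
    using equal assms unfolding DERIV_def by (simp add: power_0_left)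
qed

text \<open>The cube is the least power that makes this bump \<open>C\<^sup>2\<close>, as test functions require.\<close>

definition bump :: "real \<Rightarrow> real" where
  "bump y = (max 0 (1 - y^2)) ^ 3"

definition bump1 :: "real \<Rightarrow> real" where
  "bump1 y = - 6 * y * (max 0 (1 - y^2)) ^ 2"

definition bump2 :: "real \<Rightarrow> real" where
  "bump2 y = - 6 * (max 0 (1 - y^2)) ^ 2 + 24 * y^2 * max 0 (1 - y^2)"

lemma has_real_derivative_bump: "(bump has_real_derivative bump1 y) (at y)"
proof -
  have "((\<lambda>y. (max 0 (1 - y^2)) ^ Suc 2) has_real_derivative
      (real (Suc 2) * (max 0 (1 - y^2)) ^ 2) * (- (2 * y))) (at y)"
    by (rule DERIV_chain2[OF has_real_derivative_max0_power]) (auto intro!: derivative_eq_intros)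
  then show ?thesis
    unfolding bump_def[abs_def] bump1_def by (simp add: numeral_3_eq_3 mult_ac)
qed

lemma has_real_derivative_bump1: "(bump1 has_real_derivative bump2 y) (at y)"
proof -
  have "((\<lambda>y. (max 0 (1 - y^2)) ^ Suc 1) has_real_derivative
      (real (Suc 1) * (max 0 (1 - y^2)) ^ 1) * (- (2 * y))) (at y)"
    by (rule DERIV_chain2[OF has_real_derivative_max0_power]) (auto intro!: derivative_eq_intros)
  then have "((\<lambda>y. (max 0 (1 - y^2)) ^ 2) has_real_derivative 2 * max 0 (1 - y^2) * (- (2 * y))) (at y)"
    by (simp add: numeral_2_eq_2)
  from DERIV_mult'[OF DERIV_cmult[OF DERIV_ident] this, of "- 6"] show ?thesis
    unfolding bump1_def[abs_def] bump2_def by (simp add: power2_eq_square algebra_simps)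
qed

lemma continuous_on_bump:
  "continuous_on UNIV bump" "continuous_on UNIV bump1" "continuous_on UNIV bump2"
  unfolding bump_def[abs_def] bump1_def[abs_def] bump2_def[abs_def] by (intro continuous_intros)+

lemma bump_0: "bump 0 = 1" "bump1 0 = 0"
  by (simp_all add: bump_def bump1_def)

lemma bump_eq_0:
  assumes "1 < \<bar>y\<bar>"
  shows "bump y = 0"
proof -
  have "1 * 1 < \<bar>y\<bar> * \<bar>y\<bar>"
    using assms by (intro mult_strict_mono) auto
  then show ?thesis
    by (simp add: bump_def power2_eq_square)
qed

lemma abs_bump_le: "\<bar>bump y\<bar> \<le> 1" "\<bar>bump1 y\<bar> \<le> 6" "\<bar>bump2 y\<bar> \<le> 30"
proof -
  define m where "m = max 0 (1 - y^2)"
  have m: "0 \<le> m" "m \<le> 1"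
    by (auto simp: m_def)
  have "y^2 * m \<le> 1 \<and> \<bar>y\<bar> * m \<le> 1"
  proof (cases "m = 0")
    case False
    then have "y^2 \<le> 1"
      by (auto simp: m_def)
    then show ?thesis
      using m by (auto simp: abs_square_le_1 intro: mult_le_one)
  qed simp
  then have y2m: "y^2 * m \<le> 1" and ym: "\<bar>y\<bar> * m \<le> 1"
    by auto
  show "\<bar>bump y\<bar> \<le> 1"
    unfolding bump_def m_def[symmetric] using m by (simp add: power_le_one)
  have "\<bar>y\<bar> * m * m \<le> 1"
    using ym m by (rule mult_le_one)
  then show "\<bar>bump1 y\<bar> \<le> 6"
    unfolding bump1_def m_def[symmetric] by (simp add: abs_mult power2_eq_square mult_ac)
  have "m^2 \<le> 1" "0 \<le> m^2" "0 \<le> y^2 * m"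
    using m by (simp_all add: power_le_one)
  then show "\<bar>bump2 y\<bar> \<le> 30"
    unfolding bump2_def m_def[symmetric] using y2m by (simp only: abs_le_iff mult.assoc) (intro conjI; linarith)
qed

definition cutoff :: "real \<Rightarrow> real poly \<Rightarrow> real \<Rightarrow> real" where
  "cutoff r p y = poly p y * bump (y / r)"

definition cutoff1 :: "real \<Rightarrow> real poly \<Rightarrow> real \<Rightarrow> real" where
  "cutoff1 r p y = poly (pderiv p) y * bump (y / r) + poly p y * (bump1 (y / r) / r)"

definition cutoff2 :: "real \<Rightarrow> real poly \<Rightarrow> real \<Rightarrow> real" where
  "cutoff2 r p y = poly (pderiv (pderiv p)) y * bump (y / r)
     + 2 * (poly (pderiv p) y * (bump1 (y / r) / r)) + poly p y * (bump2 (y / r) / r / r)"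

lemma has_real_derivative_bump_scaled:
  assumes "0 < r"
  shows "((\<lambda>y. bump (y / r)) has_real_derivative bump1 (y / r) / r) (at y)"
    and "((\<lambda>y. bump1 (y / r) / r) has_real_derivative bump2 (y / r) / r / r) (at y)"
proof -
  have d: "((\<lambda>y. y / r) has_real_derivative 1 / r) (at y)"
    using assms by (auto intro!: derivative_eq_intros)
  show "((\<lambda>y. bump (y / r)) has_real_derivative bump1 (y / r) / r) (at y)"
    using DERIV_chain2[OF has_real_derivative_bump d] by simp
  show "((\<lambda>y. bump1 (y / r) / r) has_real_derivative bump2 (y / r) / r / r) (at y)"
    using DERIV_cdivide[OF DERIV_chain2[OF has_real_derivative_bump1 d], of r] by simp
qed

lemma has_real_derivative_cutoff:
  assumes "0 < r"
  shows "(cutoff r p has_real_derivative cutoff1 r p y) (at y)"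
    and "(cutoff1 r p has_real_derivative cutoff2 r p y) (at y)"
proof -
  note bump' = has_real_derivative_bump_scaled[OF assms]
  show "(cutoff r p has_real_derivative cutoff1 r p y) (at y)"
    using DERIV_mult'[OF poly_DERIV[of p y] bump'(1)]
    unfolding cutoff_def[abs_def] cutoff1_def by (simp add: algebra_simps)
  show "(cutoff1 r p has_real_derivative cutoff2 r p y) (at y)"
    using DERIV_add[OF DERIV_mult'[OF poly_DERIV[of "pderiv p" y] bump'(1)]
        DERIV_mult'[OF poly_DERIV[of p y] bump'(2)]]
    unfolding cutoff1_def[abs_def] cutoff2_def by (simp add: algebra_simps)
qed

lemma continuous_on_cutoff:
  assumes "0 < r"
  shows "continuous_on UNIV (cutoff r p)" "continuous_on UNIV (cutoff1 r p)" "continuous_on UNIV (cutoff2 r p)"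
proof -
  have "continuous_on UNIV (\<lambda>y. y / r)"
    using assms by (intro continuous_intros) auto
  then have c: "continuous_on UNIV (\<lambda>y. bump (y / r))" "continuous_on UNIV (\<lambda>y. bump1 (y / r))"
    "continuous_on UNIV (\<lambda>y. bump2 (y / r))"
    by (auto intro: continuous_on_compose2[OF continuous_on_bump(1)]
        continuous_on_compose2[OF continuous_on_bump(2)] continuous_on_compose2[OF continuous_on_bump(3)])
  then show "continuous_on UNIV (cutoff r p)" "continuous_on UNIV (cutoff1 r p)"
    "continuous_on UNIV (cutoff2 r p)"
    unfolding cutoff_def[abs_def] cutoff1_def[abs_def] cutoff2_def[abs_def]
    using assms by (auto intro!: c continuous_intros)
qed

lemma cutoff_eq_0:
  assumes "0 < r" "r < \<bar>y\<bar>"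
  shows "cutoff r p y = 0"
proof -
  have "1 < \<bar>y / r\<bar>"
    using assms by simp
  then show ?thesis
    by (simp add: cutoff_def bump_eq_0)
qed

lemma tendsto_cutoff:
  "(\<lambda>n. cutoff (Suc n) p y) \<longlonglongrightarrow> poly p y"
  "(\<lambda>n. cutoff1 (Suc n) p y) \<longlonglongrightarrow> poly (pderiv p) y"
  "(\<lambda>n. cutoff2 (Suc n) p y) \<longlonglongrightarrow> poly (pderiv (pderiv p)) y"
proof -
  have inv: "(\<lambda>n. 1 / real (Suc n)) \<longlonglongrightarrow> 0"
    using LIMSEQ_inverse_real_of_nat by (simp add: divide_inverse)
  have arg: "(\<lambda>n. y / real (Suc n)) \<longlonglongrightarrow> 0"
    using tendsto_mult[OF tendsto_const[of y] inv] by simp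
  have isCont: "isCont bump x" "isCont bump1 x" "isCont bump2 x" for x
    using continuous_on_bump by (simp_all add: continuous_on_eq_continuous_at)
  have b0: "(\<lambda>n. bump (y / Suc n)) \<longlonglongrightarrow> 1"
    using isCont_tendsto_compose[OF isCont(1) arg] by (simp add: bump_0)
  have b1: "(\<lambda>n. bump1 (y / Suc n) / Suc n) \<longlonglongrightarrow> 0"
    using tendsto_mult[OF isCont_tendsto_compose[OF isCont(2) arg] inv] by simp
  have b2: "(\<lambda>n. bump2 (y / Suc n) / Suc n / Suc n) \<longlonglongrightarrow> 0"
    using tendsto_mult[OF tendsto_mult[OF isCont_tendsto_compose[OF isCont(3) arg] inv] inv] by simp
  show "(\<lambda>n. cutoff (Suc n) p y) \<longlonglongrightarrow> poly p y"
    unfolding cutoff_def using tendsto_mult[OF tendsto_const b0] by simp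
  show "(\<lambda>n. cutoff1 (Suc n) p y) \<longlonglongrightarrow> poly (pderiv p) y"
    unfolding cutoff1_def
    using tendsto_add[OF tendsto_mult[OF tendsto_const b0] tendsto_mult[OF tendsto_const b1]]
    by simp
  show "(\<lambda>n. cutoff2 (Suc n) p y) \<longlonglongrightarrow> poly (pderiv (pderiv p)) y"
    unfolding cutoff2_def
    using tendsto_add[OF tendsto_add[OF tendsto_mult[OF tendsto_const b0]
        tendsto_mult[OF tendsto_const tendsto_mult[OF tendsto_const b1]]] tendsto_mult[OF tendsto_const b2]]
    by simp
qed

definition cutoff_bound :: "real poly \<Rightarrow> real \<Rightarrow> real" where
  "cutoff_bound p y = 30 * (1 + \<bar>y\<bar>)
     * (\<bar>poly p y\<bar> + 2 * \<bar>poly (pderiv p) y\<bar> + \<bar>poly (pderiv (pderiv p)) y\<bar>)"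

lemma abs_bump_scaled_le:
  assumes "1 \<le> r"
  shows "\<bar>bump (y / r)\<bar> \<le> 1" "\<bar>bump1 (y / r) / r\<bar> \<le> 6" "\<bar>bump2 (y / r) / r / r\<bar> \<le> 30"
proof -
  have div_le: "\<bar>z / r\<bar> \<le> \<bar>z\<bar>" for z
  proof -
    have "\<bar>z\<bar> / r \<le> \<bar>z\<bar> / 1"
      by (rule divide_left_mono) (use assms in auto)
    then show ?thesis
      using assms by (simp add: abs_divide)
  qed
  have "\<bar>bump1 (y / r) / r\<bar> \<le> \<bar>bump1 (y / r)\<bar>" "\<bar>bump2 (y / r) / r / r\<bar> \<le> \<bar>bump2 (y / r)\<bar>"
    using div_le order_trans by blast+
  then show "\<bar>bump (y / r)\<bar> \<le> 1" "\<bar>bump1 (y / r) / r\<bar> \<le> 6" "\<bar>bump2 (y / r) / r / r\<bar> \<le> 30"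
    using abs_bump_le[of "y / r"] by linarith+
qed

lemma abs_cutoff_le:
  assumes "1 \<le> r"
  shows "(1 + \<bar>y\<bar>) * \<bar>cutoff r p y\<bar> \<le> cutoff_bound p y"
    and "(1 + \<bar>y\<bar>) * \<bar>cutoff1 r p y\<bar> \<le> cutoff_bound p y"
    and "(1 + \<bar>y\<bar>) * \<bar>cutoff2 r p y\<bar> \<le> cutoff_bound p y"
proof -
  define a where "a = \<bar>poly p y\<bar>"
  define b where "b = \<bar>poly (pderiv p) y\<bar>"
  define c where "c = \<bar>poly (pderiv (pderiv p)) y\<bar>"
  have abc: "0 \<le> a" "0 \<le> b" "0 \<le> c"
    by (simp_all add: a_def b_def c_def)
  note bounds = abs_bump_scaled_le[OF assms]
  have "\<bar>cutoff r p y\<bar> \<le> a * 1"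
    unfolding cutoff_def a_def abs_mult by (rule mult_left_mono[OF bounds(1)]) simp
  then have 0: "\<bar>cutoff r p y\<bar> \<le> 30 * (a + 2 * b + c)"
    using abc by simp
  have "\<bar>cutoff1 r p y\<bar> \<le> b * \<bar>bump (y / r)\<bar> + a * \<bar>bump1 (y / r) / r\<bar>"
    unfolding cutoff1_def by (rule order_trans[OF abs_triangle_ineq]) (simp add: abs_mult a_def b_def)
  also have "\<dots> \<le> b * 1 + a * 6"
    using abc by (intro add_mono mult_left_mono bounds)
  finally have 1: "\<bar>cutoff1 r p y\<bar> \<le> 30 * (a + 2 * b + c)"
    using abc by simp
  have "\<bar>cutoff2 r p y\<bar>
      \<le> c * \<bar>bump (y / r)\<bar> + 2 * (b * \<bar>bump1 (y / r) / r\<bar>) + a * \<bar>bump2 (y / r) / r / r\<bar>"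
    unfolding cutoff2_def
    by (rule order_trans[OF abs_triangle_ineq] order_trans[OF add_mono[OF abs_triangle_ineq order_refl]])+
      (simp add: abs_mult a_def b_def c_def)
  also have "\<dots> \<le> c * 1 + 2 * (b * 6) + a * 30"
    using abc by (intro add_mono mult_left_mono bounds) simp_all
  finally have 2: "\<bar>cutoff2 r p y\<bar> \<le> 30 * (a + 2 * b + c)"
    using abc by simp
  have "cutoff_bound p y = (1 + \<bar>y\<bar>) * (30 * (a + 2 * b + c))"
    by (simp add: cutoff_bound_def a_def b_def c_def algebra_simps)
  with 0 1 2 show "(1 + \<bar>y\<bar>) * \<bar>cutoff r p y\<bar> \<le> cutoff_bound p y"
    "(1 + \<bar>y\<bar>) * \<bar>cutoff1 r p y\<bar> \<le> cutoff_bound p y" "(1 + \<bar>y\<bar>) * \<bar>cutoff2 r p y\<bar> \<le> cutoff_bound p y"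
    by (simp_all add: mult_left_mono)
qed

lemma integrable_cutoff_bound_sq: "integrable lborel (\<lambda>y. (cutoff_bound p y)^2 * gauss1 y)"
proof (rule Bochner_Integration.integrable_bound)
  define Q where "Q = smult 5400 ([:1, 0, 1:]
    * (p * p + smult 4 (pderiv p * pderiv p) + pderiv (pderiv p) * pderiv (pderiv p)))"
  show "integrable lborel (\<lambda>y. poly Q y * gauss1 y)"
    by (rule integrable_poly_gauss1)
  have "continuous_on UNIV (\<lambda>y. (cutoff_bound p y)^2 * gauss1 y)"
    unfolding cutoff_bound_def gauss1_def by (intro continuous_intros) auto
  then show "(\<lambda>y. (cutoff_bound p y)^2 * gauss1 y) \<in> borel_measurable lborel"
    by (simp add: borel_measurable_continuous_onI)
  have "(cutoff_bound p y)^2 \<le> poly Q y" for y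
  proof -
    define a where "a = \<bar>poly p y\<bar>"
    define b where "b = \<bar>poly (pderiv p) y\<bar>"
    define c where "c = \<bar>poly (pderiv (pderiv p)) y\<bar>"
    have ineqs: "(1 + \<bar>y\<bar>)^2 \<le> 2 * (1 + y^2)" "(a + 2 * b + c)^2 \<le> 3 * (a^2 + 4 * b^2 + c^2)"
      using zero_le_power2[of "\<bar>y\<bar> - 1"] zero_le_power2[of "a - 2 * b"]
        zero_le_power2[of "2 * b - c"] zero_le_power2[of "a - c"]
      by (simp_all add: power2_eq_square algebra_simps)
    have "(cutoff_bound p y)^2 = 900 * ((1 + \<bar>y\<bar>)^2 * (a + 2 * b + c)^2)"
      unfolding cutoff_bound_def a_def b_def c_def by (simp only: power_mult_distrib) simp
    also have "\<dots> \<le> 900 * ((2 * (1 + y^2)) * (3 * (a^2 + 4 * b^2 + c^2)))"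
      using ineqs by (intro mult_left_mono mult_mono) auto
    also have "\<dots> = poly Q y"
      by (simp add: Q_def a_def b_def c_def algebra_simps power2_eq_square)
    finally show ?thesis .
  qed
  then show "AE y in lborel. norm ((cutoff_bound p y)^2 * gauss1 y) \<le> norm (poly Q y * gauss1 y)"
    using gauss1_pos
    by (auto intro!: AE_I2 mult_right_mono order_trans[OF _ abs_ge_self] simp: abs_mult less_imp_le)
qed

section \<open>Extending the weak equation to Hermite tensors\<close>

lemma tendsto_Lstar_formula:
  assumes "\<And>k y. (\<lambda>n. U n k y) \<longlonglongrightarrow> L k y" "\<And>k y. (\<lambda>n. U1 n k y) \<longlonglongrightarrow> L1 k y"
    "\<And>k y. (\<lambda>n. U2 n k y) \<longlonglongrightarrow> L2 k y"
  shows "(\<lambda>n. Lstar_formula C (U n) (U1 n) (U2 n) x) \<longlonglongrightarrow> Lstar_formula C L L1 L2 x"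
  unfolding Lstar_formula_def
  by (intro tendsto_intros tendsto_tensor) (auto simp: assms)

lemma continuous_on_Lstar_formula:
  assumes "\<And>k. continuous_on UNIV (U k)" "\<And>k. continuous_on UNIV (U1 k)" "\<And>k. continuous_on UNIV (U2 k)"
  shows "continuous_on UNIV (Lstar_formula C U U1 U2)"
proof -
  have "continuous_on UNIV (\<lambda>x::real^'a. x $ l)" for l
    by (rule linear_continuous_on) (rule bounded_linear_vec_nth)
  then show ?thesis
    unfolding Lstar_formula_def[abs_def] matrix_vector_mult_def
    by (intro continuous_intros continuous_on_tensor) (auto simp: assms)
qed

lemma abs_Lstar_formula_le:
  assumes "\<And>k y. (1 + \<bar>y\<bar>) * \<bar>U k y\<bar> \<le> E k y" "\<And>k y. (1 + \<bar>y\<bar>) * \<bar>U1 k y\<bar> \<le> E k y"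
    "\<And>k y. (1 + \<bar>y\<bar>) * \<bar>U2 k y\<bar> \<le> E k y"
  shows "\<bar>Lstar_formula C U U1 U2 x\<bar>
    \<le> ((\<Sum>i\<in>UNIV. \<Sum>j\<in>UNIV. \<bar>sym_part C $ i $ j\<bar>) + (\<Sum>i\<in>UNIV. \<Sum>l\<in>UNIV. \<bar>C $ i $ l\<bar>)) * tensor E x"
proof -
  have second: "\<bar>tensor ((U(j := U1 j))(i := if i = j then U2 j else U1 i)) x\<bar> \<le> tensor E x" for i j
    by (rule abs_tensor_le_weighted) (auto simp: assms)
  have first: "\<bar>x$l * tensor (U(i := U1 i)) x\<bar> \<le> tensor E x" for i l
    by (rule abs_tensor_le_weighted) (auto simp: assms)
  have Cv: "(C *v x) $ i = (\<Sum>l\<in>UNIV. C $ i $ l * x $ l)" for i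
    by (simp add: matrix_vector_mult_def)
  have "\<bar>Lstar_formula C U U1 U2 x\<bar>
      \<le> (\<Sum>i\<in>UNIV. \<Sum>j\<in>UNIV. \<bar>sym_part C $ i $ j\<bar> * \<bar>tensor ((U(j := U1 j))(i := if i = j then U2 j else U1 i)) x\<bar>)
        + (\<Sum>i\<in>UNIV. \<Sum>l\<in>UNIV. \<bar>C $ i $ l\<bar> * \<bar>x$l * tensor (U(i := U1 i)) x\<bar>)"
    unfolding Lstar_formula_def Cv sum_distrib_right
    by (intro order_trans[OF abs_triangle_ineq4] add_mono order_trans[OF sum_abs] sum_mono)
      (simp_all add: abs_mult mult.assoc)
  also have "\<dots> \<le> (\<Sum>i\<in>UNIV. \<Sum>j\<in>UNIV. \<bar>sym_part C $ i $ j\<bar> * tensor E x)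
        + (\<Sum>i\<in>UNIV. \<Sum>l\<in>UNIV. \<bar>C $ i $ l\<bar> * tensor E x)"
    by (intro add_mono sum_mono mult_left_mono first second) auto
  finally show ?thesis
    by (simp add: sum_distrib_right distrib_right)
qed

lemma tendsto_integral_mult_inH:
  assumes "inH u" and [measurable]: "G \<in> borel_measurable borel" "\<And>n. \<phi> n \<in> borel_measurable borel"
    "\<psi> \<in> borel_measurable borel"
    and "integrable lborel (\<lambda>x. (G x)^2 * finf x)"
    and "\<And>n x. \<bar>\<phi> n x\<bar> \<le> G x" and "\<And>x. (\<lambda>n. \<phi> n x) \<longlonglongrightarrow> \<psi> x"
  shows "(\<lambda>n. \<integral>x. u x * \<phi> n x \<partial>lborel) \<longlonglongrightarrow> (\<integral>x. u x * \<psi> x \<partial>lborel)"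
proof (rule integral_dominated_convergence[where w = "\<lambda>x. \<bar>u x * G x\<bar>"])
  have [measurable]: "u \<in> borel_measurable borel"
    using assms(1) by (simp add: inH_def)
  show "(\<lambda>x. u x * \<psi> x) \<in> borel_measurable lborel"
    by measurable
  show "(\<lambda>x. u x * \<phi> n x) \<in> borel_measurable lborel" for n
    by measurable
  show "integrable lborel (\<lambda>x. \<bar>u x * G x\<bar>)"
    by (rule integrable_abs, rule integrable_mult_inH[OF assms(1,2,5)])
  show "AE x in lborel. (\<lambda>n. u x * \<phi> n x) \<longlonglongrightarrow> u x * \<psi> x"
    by (intro AE_I2 tendsto_mult tendsto_const assms(7))
  show "AE x in lborel. norm (u x * \<phi> n x) \<le> \<bar>u x * G x\<bar>" for n
    unfolding real_norm_def abs_mult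
    by (intro AE_I2 mult_left_mono order_trans[OF assms(6) abs_ge_self] abs_ge_zero)
qed

lemma test_fun_cutoff_tensor: "test_fun (tensor (\<lambda>k. cutoff (Suc n) (p k)))"
proof (rule test_fun_tensor)
  show "(cutoff (Suc n) (p k) has_real_derivative cutoff1 (Suc n) (p k) y) (at y)"
    "(cutoff1 (Suc n) (p k) has_real_derivative cutoff2 (Suc n) (p k) y) (at y)" for k y
    by (simp_all add: has_real_derivative_cutoff)
  show "continuous_on UNIV (cutoff2 (Suc n) (p k))" for k
    by (simp add: continuous_on_cutoff)
  show "cutoff (Suc n) (p k) y = 0" if "real (Suc n) < \<bar>y\<bar>" for k y
    using that by (simp add: cutoff_eq_0)
qed

lemma borel_measurable_cutoff_bound_tensor [measurable]:
  "tensor (\<lambda>k. cutoff_bound (p k)) \<in> borel_measurable borel"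
  unfolding cutoff_bound_def by (rule borel_measurable_tensor) (intro continuous_intros)

lemma integrable_cutoff_bound_tensor_sq:
  "integrable lborel (\<lambda>x. (tensor (\<lambda>k. cutoff_bound (p k)) x)^2 * finf x)"
proof -
  have "integrable lborel (\<lambda>x. tensor (\<lambda>k y. cutoff_bound (p k) y * cutoff_bound (p k) y) x * finf x)"
    by (rule integrable_tensor_finf) (use integrable_cutoff_bound_sq in \<open>simp add: power2_eq_square\<close>)
  then show ?thesis
    by (simp add: tensor_mult power2_eq_square)
qed

lemma tendsto_integral_cutoff_tensor:
  assumes "inH u"
  shows "(\<lambda>n. \<integral>x. u x * tensor (\<lambda>k. cutoff (Suc n) (p k)) x \<partial>lborel)
    \<longlonglongrightarrow> (\<integral>x. u x * tensor (\<lambda>k. poly (p k)) x \<partial>lborel)"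
proof (rule tendsto_integral_mult_inH[OF assms borel_measurable_cutoff_bound_tensor])
  show "\<bar>tensor (\<lambda>k. cutoff (Suc n) (p k)) x\<bar> \<le> tensor (\<lambda>k. cutoff_bound (p k)) x" for n x
    by (rule abs_tensor_le_weighted) (simp add: abs_cutoff_le)
  show "(\<lambda>n. tensor (\<lambda>k. cutoff (Suc n) (p k)) x) \<longlonglongrightarrow> tensor (\<lambda>k. poly (p k)) x" for x
    by (rule tendsto_tensor) (rule tendsto_cutoff)
  show "tensor (\<lambda>k. cutoff (Suc n) (p k)) \<in> borel_measurable borel" for n
    by (intro borel_measurable_tensor) (simp add: continuous_on_cutoff)
  show "tensor (\<lambda>k. poly (p k)) \<in> borel_measurable borel"
    by (intro borel_measurable_tensor continuous_intros)
qed (rule integrable_cutoff_bound_tensor_sq)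

lemma tendsto_integral_Lstar_cutoff_tensor:
  assumes "inH u"
  shows "(\<lambda>n. \<integral>x. u x * Lstar C (tensor (\<lambda>k. cutoff (Suc n) (p k))) x \<partial>lborel)
    \<longlonglongrightarrow> (\<integral>x. u x * Lstar C (tensor (\<lambda>k. poly (p k))) x \<partial>lborel)"
proof -
  define U U1 U2 where "U n k = cutoff (Suc n) (p k)" and "U1 n k = cutoff1 (Suc n) (p k)"
    and "U2 n k = cutoff2 (Suc n) (p k)" for n k
  define P P1 P2 where "P k = poly (p k)" and "P1 k = poly (pderiv (p k))"
    and "P2 k = poly (pderiv (pderiv (p k)))" for k
  define K where "K = (\<Sum>i\<in>UNIV. \<Sum>j\<in>UNIV. \<bar>sym_part C $ i $ j\<bar>) + (\<Sum>i\<in>UNIV. \<Sum>l\<in>UNIV. \<bar>C $ i $ l\<bar>)"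
  have c: "continuous_on UNIV (U n k)" "continuous_on UNIV (U1 n k)" "continuous_on UNIV (U2 n k)" for n k
    unfolding U_def[abs_def] U1_def[abs_def] U2_def[abs_def] by (simp_all add: continuous_on_cutoff)
  have "Lstar C (tensor (U n)) = Lstar_formula C (U n) (U1 n) (U2 n)" for n
    unfolding U_def[abs_def] U1_def[abs_def] U2_def[abs_def]
    by (rule Lstar_tensor) (simp_all add: has_real_derivative_cutoff)
  moreover have "Lstar C (tensor P) = Lstar_formula C P P1 P2"
    unfolding P_def[abs_def] P1_def[abs_def] P2_def[abs_def] by (rule Lstar_tensor) (rule poly_DERIV)+
  moreover have "(\<lambda>n. \<integral>x. u x * Lstar_formula C (U n) (U1 n) (U2 n) x \<partial>lborel)
      \<longlonglongrightarrow> (\<integral>x. u x * Lstar_formula C P P1 P2 x \<partial>lborel)"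
  proof (rule tendsto_integral_mult_inH[OF assms, where G = "\<lambda>x. K * tensor (\<lambda>k. cutoff_bound (p k)) x"])
    show "\<bar>Lstar_formula C (U n) (U1 n) (U2 n) x\<bar> \<le> K * tensor (\<lambda>k. cutoff_bound (p k)) x" for n x
      unfolding K_def U_def U1_def U2_def by (rule abs_Lstar_formula_le) (simp_all add: abs_cutoff_le)
    show "(\<lambda>n. Lstar_formula C (U n) (U1 n) (U2 n) x) \<longlonglongrightarrow> Lstar_formula C P P1 P2 x" for x
      unfolding U_def U1_def U2_def P_def P1_def P2_def
      by (rule tendsto_Lstar_formula) (rule tendsto_cutoff)+
    show "Lstar_formula C (U n) (U1 n) (U2 n) \<in> borel_measurable borel" for n
      by (intro borel_measurable_continuous_onI continuous_on_Lstar_formula c)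
    show "Lstar_formula C P P1 P2 \<in> borel_measurable borel"
      unfolding P_def P1_def P2_def
      by (intro borel_measurable_continuous_onI continuous_on_Lstar_formula) (intro continuous_intros)+
    show "integrable lborel (\<lambda>x. (K * tensor (\<lambda>k. cutoff_bound (p k)) x)^2 * finf x)"
      using integrable_cutoff_bound_tensor_sq[of p] by (simp add: power_mult_distrib mult.assoc)
  qed measurable
  ultimately show ?thesis
    by (simp add: U_def[abs_def] P_def[abs_def])
qed

lemma weak_equation_hermite_tensor:
  assumes "inH f'" "inH u"
    and weak: "\<And>\<phi>. test_fun \<phi> \<Longrightarrow> (\<integral>x. f' x * \<phi> x \<partial>lborel) = (\<integral>x. u x * Lstar C \<phi> x \<partial>lborel)"
  shows "(\<integral>x. f' x * hermite_tensor \<alpha> x \<partial>lborel) = (\<integral>x. u x * Lstar C (hermite_tensor \<alpha>) x \<partial>lborel)"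
proof -
  let ?p = "\<lambda>k. hermite_poly (\<alpha> k)"
  have "(\<lambda>n. \<integral>x. u x * Lstar C (tensor (\<lambda>k. cutoff (Suc n) (?p k))) x \<partial>lborel)
      \<longlonglongrightarrow> (\<integral>x. f' x * hermite_tensor \<alpha> x \<partial>lborel)"
    using tendsto_integral_cutoff_tensor[OF assms(1), of ?p]
    unfolding weak[OF test_fun_cutoff_tensor] hermite_tensor_def .
  moreover have "(\<lambda>n. \<integral>x. u x * Lstar C (tensor (\<lambda>k. cutoff (Suc n) (?p k))) x \<partial>lborel)
      \<longlonglongrightarrow> (\<integral>x. u x * Lstar C (hermite_tensor \<alpha>) x \<partial>lborel)"
    using tendsto_integral_Lstar_cutoff_tensor[OF assms(2), of C ?p] by (simp add: hermite_tensor_def)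
  ultimately show ?thesis
    by (rule LIMSEQ_unique)
qed

section \<open>The Hermite coefficients along a solution\<close>

lemma has_real_derivative_Hinner_g_alpha:
  assumes "FP_solution_H C f" "0 < t"
  shows "((\<lambda>s. Hinner (f s) (g_alpha \<alpha>)) has_real_derivative
           - (\<Sum>j\<in>UNIV. \<Sum>l\<in>UNIV. \<alpha> j * C $ j $ l * Hinner (f t) (g_alpha (mplus (mminus \<alpha> j) l)))) (at t)"
proof -
  have fH: "\<And>s. 0 < s \<Longrightarrow> inH (f s)"
    using assms(1) unfolding FP_solution_H_def by blast
  obtain f' where f'H: "inH f'"
    and lim: "((\<lambda>h. Hnorm (\<lambda>x. (f (t + h) x - f t x) / h - f' x)) \<longlongrightarrow> 0) (at 0)"
    and weak: "\<And>\<phi>. test_fun \<phi> \<Longrightarrow> (\<integral>x. f' x * \<phi> x \<partial>lborel) = (\<integral>x. f t x * Lstar C \<phi> x \<partial>lborel)"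
    using assms unfolding FP_solution_H_def by blast
  have int: "integrable lborel (\<lambda>x. f t x * hermite_tensor \<beta> x)" for \<beta>
    using fH[OF assms(2)] borel_measurable_hermite_tensor integrable_hermite_tensor_sq
    by (rule integrable_mult_inH)
  have "Hinner f' (g_alpha \<alpha>) = (\<integral>x. f t x * Lstar C (hermite_tensor \<alpha>) x \<partial>lborel)"
    unfolding Hinner_g_alpha by (rule weak_equation_hermite_tensor[OF f'H fH[OF assms(2)] weak])
  also have "\<dots> = (\<integral>x. - (\<Sum>j\<in>UNIV. \<Sum>l\<in>UNIV.
      \<alpha> j * C $ j $ l * (f t x * hermite_tensor (mplus (mminus \<alpha> j) l) x)) \<partial>lborel)"
    unfolding Lstar_hermite_tensor by (simp add: sum_distrib_left mult_ac)
  also have "\<dots> = - (\<Sum>j\<in>UNIV. \<Sum>l\<in>UNIV. \<alpha> j * C $ j $ l * Hinner (f t) (g_alpha (mplus (mminus \<alpha> j) l)))"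
    by (simp add: Hinner_g_alpha int)
  finally have eq: "Hinner f' (g_alpha \<alpha>)
      = - (\<Sum>j\<in>UNIV. \<Sum>l\<in>UNIV. \<alpha> j * C $ j $ l * Hinner (f t) (g_alpha (mplus (mminus \<alpha> j) l)))" .
  show ?thesis
    using has_real_derivative_Hinner[OF fH f'H inH_g_alpha[of \<alpha>] assms(2) lim] unfolding eq .
qed

lemma mabs_fun_upd: "mabs (\<beta>(i := n)) + \<beta> i = mabs \<beta> + n"
proof -
  have "mabs (\<beta>(i := n)) = n + (\<Sum>k\<in>UNIV - {i}. \<beta> k)"
    unfolding mabs_def by (subst sum.remove[of _ i]) (auto intro!: sum.cong)
  moreover have "mabs \<beta> = \<beta> i + (\<Sum>k\<in>UNIV - {i}. \<beta> k)"
    unfolding mabs_def by (subst sum.remove[of _ i]) auto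
  ultimately show ?thesis
    by simp
qed

lemma mabs_mplus_mminus:
  assumes "0 < \<alpha> j"
  shows "mabs (mplus (mminus \<alpha> j) l) = mabs \<alpha>"
  using mabs_fun_upd[of \<alpha> j "\<alpha> j - 1"] mabs_fun_upd[of "mminus \<alpha> j" l "mminus \<alpha> j l + 1"] assms
  unfolding mplus_def mminus_def by simp

theorem proposition5p17:
  fixes C :: "real^'d^'d" and f :: "real \<Rightarrow> real^'d \<Rightarrow> real"
    and m :: nat and \<alpha> :: "'d \<Rightarrow> nat" and t :: real
  assumes "conditionA C"
    and "FP_solution_H C f"
    and "m \<ge> 1"
    and "mabs \<alpha> = m"
    and "t > 0"
  defines "D \<equiv> (\<lambda>\<beta> s. hcoeff (f s) \<beta> / multinom \<beta>)"
  shows "((\<lambda>s. D \<alpha> s) has_real_derivative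
           - (\<Sum>j\<in>UNIV. \<Sum>l\<in>UNIV. real (\<alpha> j) * C $ j $ l * D (mplus (mminus \<alpha> j) l) t))
         (at t)"
proof -
  have D: "D \<beta> s = Hinner (f s) (g_alpha \<beta>) / fact (mabs \<beta>)" for \<beta> s
    unfolding D_def by (rule hcoeff_div_multinom)
  have terms: "\<alpha> j * C $ j $ l * D (mplus (mminus \<alpha> j) l) t
      = \<alpha> j * C $ j $ l * Hinner (f t) (g_alpha (mplus (mminus \<alpha> j) l)) / fact m" for j l
    using mabs_mplus_mminus[of \<alpha> j l] assms(4) by (cases "\<alpha> j = 0") (simp_all add: D)
  have "((\<lambda>s. D \<alpha> s) has_real_derivative
      - (\<Sum>j\<in>UNIV. \<Sum>l\<in>UNIV. \<alpha> j * C $ j $ l * Hinner (f t) (g_alpha (mplus (mminus \<alpha> j) l))) / fact m) (at t)"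
    unfolding D[of \<alpha>] assms(4)
    by (rule DERIV_cdivide) (rule has_real_derivative_Hinner_g_alpha[OF assms(2,5)])
  then show ?thesis
    unfolding terms by (simp add: sum_divide_distrib)
qed

end
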